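(* Let $d\ge1$, $j>0$, $k\ge1$, let $s\ge\frac{d+1}{d}k+j$, and let $n\ge s$. Then a $j$-junta $\mathcal{J}\subseteq\binom{[n]}{k}$ does not contain a $(d,k,s)$-cluster if and only if $\mathcal{J}$ is $(d+1)$-wise intersecting.
   Context: A family $\mathcal{J}\subseteq\binom{[n]}{k}$ is a $j$-junta if there exist a set $J\subseteq[n]$ with $|J|=j$ and a family $\mathcal{G}\subseteq\mathcal{P}(J)$ such that for every $A\in\binom{[n]}{k}$, $A\in\mathcal{J}$ iff $A\cap J\in\mathcal{G}$. A family $\{A_0,\dots,A_d\}\subseteq\binom{[n]}{k}$ is a $(d,k,s)$-cluster if $|A_0\cup\cdots\cup A_d|\le s$ and $A_0\cap\cdots\cap A_d=\varnothing$; a family contains it if all $A_i$ belong to the family. A family is $t$-wise intersecting if it does not contain $t$ sets (not necessarily distinct) whose intersection is empty. *)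

theory Defs
  imports Complex_Main
begin

definition ksets :: "nat \<Rightarrow> nat \<Rightarrow> nat set set" where
  "ksets n k = {A. A \<subseteq> {1..n} \<and> card A = k}"

definition is_junta :: "nat \<Rightarrow> nat \<Rightarrow> nat \<Rightarrow> nat set set \<Rightarrow> bool" where
  "is_junta n k j F \<longleftrightarrow> F \<subseteq> ksets n k \<and>
     (\<exists>J G. J \<subseteq> {1..n} \<and> card J = j \<and> G \<subseteq> Pow J \<and>
        (\<forall>A \<in> ksets n k. A \<in> F \<longleftrightarrow> A \<inter> J \<in> G))"

definition contains_cluster :: "nat \<Rightarrow> nat \<Rightarrow> nat \<Rightarrow> nat set set \<Rightarrow> bool" where
  "contains_cluster d k s F \<longleftrightarrow>
     (\<exists>A :: nat \<Rightarrow> nat set. (\<forall>i\<le>d. A i \<in> F \<and> card (A i) = k) \<and>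
        card (\<Union>i\<le>d. A i) \<le> s \<and> (\<Inter>i\<le>d. A i) = {})"

text \<open>F is t-wise intersecting: no t members (not necessarily distinct) have empty intersection.\<close>
definition t_wise_intersecting :: "nat \<Rightarrow> nat set set \<Rightarrow> bool" where
  "t_wise_intersecting t F \<longleftrightarrow>
     \<not> (\<exists>A :: nat \<Rightarrow> nat set. (\<forall>i<t. A i \<in> F) \<and> (\<Inter>i<t. A i) = {})"

end

theory Submission imports Defs begin

text \<open>If \<open>F\<close> contains \<open>d + 1\<close> sets with empty intersection, keep their traces on the junta
  set \<open>J\<close> and replace the parts outside \<open>J\<close> by subsets of a fixed \<open>m\<close>-set \<open>S\<close> disjoint from \<open>J\<close>,
  with \<open>m = s - j\<close>. The junta property keeps the new sets in \<open>F\<close>, and their union lies in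
  \<open>J \<union> S\<close>, of size at most \<open>s\<close>. Their intersection stays empty as long as the outside parts
  lie in \<open>k\<close>-subsets of \<open>S\<close> with empty common intersection, and such subsets exist whenever
  \<open>(d + 1) k \<le> d m\<close>: take the complements of \<open>d + 1\<close> windows of length \<open>m - k\<close> covering \<open>S\<close>.\<close>

lemma windows_cover:
  fixes w k d x :: nat
  assumes "w > 0" "k \<le> d * w" "x < k + w"
  shows "\<exists>i\<le>d. min (i * w) k \<le> x \<and> x < min (i * w) k + w"
proof (cases "k \<le> x")
  case True
  then show ?thesis using assms by (intro exI[of _ d]) auto
next
  case False
  define i where "i = x div w"
  have lower: "i * w \<le> x" unfolding i_def by (rule div_times_less_eq_dividend)
  have upper: "x < i * w + w"
    unfolding i_def using assms(1) by (metis add.commute div_mult_mod_eq mod_less_divisor nat_add_left_cancel_less)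
  have "i * w < d * w" using lower False assms(2) by linarith
  then have "i \<le> d" by simp
  then show ?thesis using lower upper False by (intro exI[of _ i]) auto
qed

lemma ex_lessThan_subsets_Inter_empty:
  fixes w k d :: nat
  assumes "w > 0" "k \<le> d * w"
  shows "\<exists>C. (\<forall>i\<le>d. C i \<subseteq> {..<k + w} \<and> card (C i) = k) \<and> (\<Inter>i\<le>d. C i) = {}"
proof -
  define C where "C i = {..<k + w} - {min (i * w) k..<min (i * w) k + w}" for i
  have "C i \<subseteq> {..<k + w}" for i
    unfolding C_def by auto
  moreover have "card (C i) = k" for i
    unfolding C_def by (subst card_Diff_subset) auto
  moreover have "x \<notin> (\<Inter>i\<le>d. C i)" for x
  proof (cases "x < k + w")
    case True
    then obtain i where "i \<le> d" "min (i * w) k \<le> x" "x < min (i * w) k + w"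
      using windows_cover[OF assms] by blast
    then show ?thesis unfolding C_def by auto
  next
    case False
    then show ?thesis unfolding C_def by auto
  qed
  ultimately show ?thesis by blast
qed

lemma ex_subsets_Inter_empty:
  fixes d k :: nat and S :: "'a set"
  assumes "finite S" "(d + 1) * k \<le> d * card S"
  shows "\<exists>C. (\<forall>i\<le>d. C i \<subseteq> S \<and> card (C i) = k) \<and> (\<Inter>i\<le>d. C i) = {}"
proof (cases "k = 0")
  case True
  then show ?thesis by (intro exI[of _ "\<lambda>_. {}"]) auto
next
  case False
  define w where "w = card S - k"
  have "k < card S"
  proof (rule ccontr)
    assume "\<not> k < card S"
    then have "d * card S \<le> d * k" by simp
    moreover have "(d + 1) * k = k + d * k" by simp
    ultimately show False using assms(2) False by linarith
  qed
  then have w: "w > 0" "card S = k + w"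
    unfolding w_def by auto
  have "d * w = d * card S - d * k"
    unfolding w_def by (rule diff_mult_distrib2)
  then have "k \<le> d * w"
    using assms(2) by simp
  obtain C where C: "\<forall>i\<le>d. C i \<subseteq> {..<k + w} \<and> card (C i) = k" "(\<Inter>i\<le>d. C i) = {}"
    using ex_lessThan_subsets_Inter_empty[OF w(1) \<open>k \<le> d * w\<close>] by blast
  obtain f where f: "bij_betw f {..<k + w} S"
    using ex_bij_betw_nat_finite[OF assms(1)] w(2) by (metis atLeast0LessThan)
  then have inj: "inj_on f {..<k + w}" and image: "f ` {..<k + w} = S"
    by (auto simp: bij_betw_def)
  have "f ` C i \<subseteq> S \<and> card (f ` C i) = k" if "i \<le> d" for i
    using C(1) that image inj by (auto simp: card_image inj_on_subset)
  moreover have "(\<Inter>i\<le>d. f ` C i) = f ` (\<Inter>i\<le>d. C i)"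
    using image_INT[OF inj, of "{..d}" C 0] C(1) by auto
  ultimately show ?thesis using C(2) by (intro exI[of _ "\<lambda>i. f ` C i"]) auto
qed

lemma not_t_wise_intersecting_Suc_iff:
  "\<not> t_wise_intersecting (d + 1) F \<longleftrightarrow> (\<exists>A. (\<forall>i\<le>d. A i \<in> F) \<and> (\<Inter>i\<le>d. A i) = {})"
proof -
  have "{..<d + 1} = {..d}" by auto
  then show ?thesis unfolding t_wise_intersecting_def by (simp add: less_Suc_eq_le)
qed

lemma cluster_imp_not_t_wise_intersecting:
  "contains_cluster d k s F \<Longrightarrow> \<not> t_wise_intersecting (d + 1) F"
  unfolding contains_cluster_def not_t_wise_intersecting_Suc_iff by blast

lemma cluster_of_Inter_empty:
  fixes F :: "nat set set" and A :: "nat \<Rightarrow> nat set"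
  assumes F: "F \<subseteq> ksets n k" and J: "J \<subseteq> {1..n}"
    and trace: "\<And>A B. A \<in> F \<Longrightarrow> B \<in> ksets n k \<Longrightarrow> B \<inter> J = A \<inter> J \<Longrightarrow> B \<in> F"
    and room: "card J + m \<le> n" and dm: "(d + 1) * k \<le> d * m"
    and A: "\<forall>i\<le>d. A i \<in> F" "(\<Inter>i\<le>d. A i) = {}"
  shows "contains_cluster d k (card J + m) F"
proof -
  have "card ({1..n} - J) = n - card J"
    using J by (simp add: card_Diff_subset finite_subset)
  then have "m \<le> card ({1..n} - J)"
    using room by simp
  then obtain S where S: "S \<subseteq> {1..n} - J" "card S = m" "finite S"
    by (rule obtain_subset_with_card_n)
  have "(d + 1) * k \<le> d * card S"
    using dm S(2) by simp
  then obtain C where C: "\<forall>i\<le>d. C i \<subseteq> S \<and> card (C i) = k" "(\<Inter>i\<le>d. C i) = {}"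
    using ex_subsets_Inter_empty[OF S(3)] by blast
  have A_ksets: "A i \<in> ksets n k" if "i \<le> d" for i
    using A(1) F that by blast
  have A_trace: "finite (A i \<inter> J)" "card (A i \<inter> J) \<le> k" if "i \<le> d" for i
  proof -
    have "finite (A i)" "card (A i) = k"
      using A_ksets[OF that] unfolding ksets_def by (auto intro: finite_subset)
    then show "finite (A i \<inter> J)" "card (A i \<inter> J) \<le> k"
      by (auto intro: card_mono[of "A i", THEN le_trans])
  qed
  have "\<exists>E. E \<subseteq> C i \<and> card E = k - card (A i \<inter> J)" if "i \<le> d" for i
  proof -
    have "k - card (A i \<inter> J) \<le> card (C i)"
      using C(1) that by simp
    then show ?thesis by (meson obtain_subset_with_card_n)
  qed
  then obtain E where E: "\<And>i. i \<le> d \<Longrightarrow> E i \<subseteq> C i \<and> card (E i) = k - card (A i \<inter> J)"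
    by metis
  define A' where "A' i = (A i \<inter> J) \<union> E i" for i
  have E_S: "E i \<subseteq> S" if "i \<le> d" for i
    using E[OF that] C(1) that by blast
  then have A'_trace: "A' i \<inter> J = A i \<inter> J" if "i \<le> d" for i
    using that S(1) unfolding A'_def by blast
  have card_A': "card (A' i) = k" if "i \<le> d" for i
  proof -
    have "card (A' i) = card (A i \<inter> J) + card (E i)"
      unfolding A'_def using E_S[OF that] S(1) A_trace(1)[OF that] S(3)
      by (intro card_Un_disjoint) (auto intro: finite_subset)
    then show ?thesis using E[OF that] A_trace(2)[OF that] by simp
  qed
  moreover have "A' i \<subseteq> {1..n}" if "i \<le> d" for i
    using E_S[OF that] S(1) J unfolding A'_def by blast
  ultimately have "A' i \<in> ksets n k" if "i \<le> d" for i
    using that unfolding ksets_def by blast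
  then have A'_F: "A' i \<in> F" if "i \<le> d" for i
    using trace[OF A(1)[rule_format, OF that] _ A'_trace[OF that]] that by blast
  have "(\<Union>i\<le>d. A' i) \<subseteq> J \<union> S"
    using E_S unfolding A'_def by blast
  moreover have "finite (J \<union> S)"
    using J S(3) by (meson finite_UnI finite_atLeastAtMost finite_subset)
  ultimately have "card (\<Union>i\<le>d. A' i) \<le> card (J \<union> S)"
    by (simp add: card_mono)
  also have "\<dots> \<le> card J + m"
    using card_Un_le[of J S] S(2) by simp
  finally have "card (\<Union>i\<le>d. A' i) \<le> card J + m" .
  moreover have "(\<Inter>i\<le>d. A' i) = {}"
  proof (intro equalityI subsetI)
    fix x
    assume x: "x \<in> (\<Inter>i\<le>d. A' i)"
    show "x \<in> {}"
    proof (cases "x \<in> J")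
      case True
      then have "x \<in> A i" if "i \<le> d" for i
        using x A'_trace[OF that] that by blast
      then show ?thesis using A(2) by blast
    next
      case False
      then have "x \<in> C i" if "i \<le> d" for i
        using x E[OF that] that unfolding A'_def by blast
      then show ?thesis using C(2) by blast
    qed
  qed simp
  ultimately show ?thesis
    unfolding contains_cluster_def using A'_F card_A' by blast
qed

lemma cluster_size_bound:
  fixes d j k s :: nat
  assumes "d \<ge> 1" and "real s \<ge> (real d + 1) / real d * real k + real j"
  shows "j \<le> s" and "(d + 1) * k \<le> d * (s - j)"
proof -
  have "real d * ((real d + 1) / real d * real k) = (real d + 1) * real k"
    using assms(1) by simp
  then have "real d * real s \<ge> (real d + 1) * real k + real d * real j"
    using mult_left_mono[OF assms(2), of "real d"] by (simp add: distrib_left)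
  then have "real ((d + 1) * k + d * j) \<le> real (d * s)"
    by (simp add: algebra_simps)
  then have sum_le: "(d + 1) * k + d * j \<le> d * s"
    by linarith
  then have "d * j \<le> d * s"
    by linarith
  then show "j \<le> s"
    using assms(1) by simp
  then show "(d + 1) * k \<le> d * (s - j)"
    using sum_le by (simp add: diff_mult_distrib2)
qed

theorem proposition4p2:
  fixes d j k s n :: nat and F :: "nat set set"
  assumes "d \<ge> 1" and "j > 0" and "k \<ge> 1"
    and "real s \<ge> (real d + 1) / real d * real k + real j"
    and "n \<ge> s"
    and "is_junta n k j F"
  shows "\<not> contains_cluster d k s F \<longleftrightarrow> t_wise_intersecting (d + 1) F"
proof
  show "t_wise_intersecting (d + 1) F" if "\<not> contains_cluster d k s F"
  proof (rule ccontr)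
    assume "\<not> t_wise_intersecting (d + 1) F"
    then obtain A where A: "\<forall>i\<le>d. A i \<in> F" "(\<Inter>i\<le>d. A i) = {}"
      unfolding not_t_wise_intersecting_Suc_iff by blast
    obtain J G where F: "F \<subseteq> ksets n k" and J: "J \<subseteq> {1..n}" "card J = j"
      and trace: "\<forall>A \<in> ksets n k. A \<in> F \<longleftrightarrow> A \<inter> J \<in> G"
      using assms(6) unfolding is_junta_def by blast
    have "contains_cluster d k (card J + (s - j)) F"
      using cluster_size_bound[OF assms(1,4)] assms(5) J F A
      by (intro cluster_of_Inter_empty) (use trace in auto)
    then show False
      using that J(2) cluster_size_bound(1)[OF assms(1,4)] by simp
  qed
next
  show "\<not> contains_cluster d k s F" if "t_wise_intersecting (d + 1) F"
    using that cluster_imp_not_t_wise_intersecting by blast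
qed

end
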